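(* Let $\mu_0=\mathcal N(m_0,\Sigma_0)$ and $\mu_1=\mathcal N(m_1,\Sigma_1)$ on $\mathbb R^d$, where $\Sigma_0,\Sigma_1$ are commuting positive definite matrices. Let $\alpha,\beta\in C^2([0,1])$ with $\alpha_0=\beta_1=1$, $\alpha_1=\beta_0=0$, $\alpha_t,\beta_t>0$ on $(0,1)$. Let $X_0\sim\mu_0$, $X_1\sim\mu_1$ be independent, $X_t=\alpha_tX_0+\beta_tX_1$, $v_t(x)=\mathbb E[\dot\alpha_tX_0+\dot\beta_tX_1\mid X_t=x]$, and let $f^v_t$ be the flow map of $v$ ($\partial_tf_t(x)=v_t(f_t(x))$, $f_0(x)=x$). Set $m_t=\alpha_tm_0+\beta_tm_1$ and $\Sigma_t=\alpha_t^2\Sigma_0+\beta_t^2\Sigma_1$. Then $$v_t(x)=\dot m_t+\tfrac12\dot\Sigma_t\Sigma_t^{-1}(x-m_t),\qquad f^v_t(x)=m_t+\Sigma_t^{1/2}\Sigma_0^{-1/2}(x-m_0).$$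
   Context: $\dot m_t,\dot\Sigma_t$ denote time derivatives; $\Sigma^{1/2}$ is the positive definite square root. *)

theory Defs
  imports "HOL-Probability.Probability"
begin

definition pos_def_mat :: "real^'n^'n \<Rightarrow> bool" where
  "pos_def_mat S \<longleftrightarrow> transpose S = S \<and> (\<forall>x::real^'n. x \<noteq> 0 \<longrightarrow> 0 < x \<bullet> (S *v x))"

definition mat_sqrt :: "real^'n^'n \<Rightarrow> real^'n^'n" where
  "mat_sqrt S = (THE R. pos_def_mat R \<and> R ** R = S)"

definition gaussian :: "real^'n \<Rightarrow> real^'n^'n \<Rightarrow> (real^'n) measure" where
  "gaussian m S = density lborel (\<lambda>x. ennreal
     (exp (- (1/2) * ((x - m) \<bullet> (matrix_inv S *v (x - m))))
      / sqrt ((2 * pi) ^ CARD('n) * det S)))"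

text \<open>g(X) is a version of the conditional expectation E[Y | X], i.e.
  E[Y | X = x] = g x for (law of X)-almost every x.\<close>
definition is_cond_exp_given ::
  "'w measure \<Rightarrow> ('w \<Rightarrow> 'b::euclidean_space) \<Rightarrow> ('w \<Rightarrow> 'c::euclidean_space) \<Rightarrow> ('b \<Rightarrow> 'c) \<Rightarrow> bool" where
  "is_cond_exp_given M X Y g \<longleftrightarrow>
     g \<in> borel_measurable borel \<and> integrable M Y \<and> integrable M (\<lambda>\<omega>. g (X \<omega>)) \<and>
     (\<forall>A \<in> sets borel. (\<integral>\<omega>. indicator A (X \<omega>) *\<^sub>R Y \<omega> \<partial>M)
                     = (\<integral>\<omega>. indicator A (X \<omega>) *\<^sub>R g (X \<omega>) \<partial>M))"

end

theory Submission
  imports Defs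
begin

(* Everything is diagonal in a common orthonormal eigenbasis U of the commuting covariances,
   S0 = sum_u lam u u u^T and S1 = sum_u mu u u^T.  Along u, X_t has mean u.m_t and variance
   var t u = alpha_t^2 lam u + beta_t^2 mu u, the field v_t acts by the scalar rate var'/(2 var), and
   the solutions of y' = var'/(2 var) y are exactly the multiples of sqrt var, since y / sqrt var has
   derivative 0.  This gives both the flow formula and its uniqueness.

   For the conditional expectation, the error (alpha'_t X0 + beta'_t X1) - v_t(X_t) is, along each u,
   a multiple of resid u = beta_t mu u (u.(X0 - m0)) - alpha_t lam u (u.(X1 - m1)).  The affine
   reflection of (x0, x1) which fixes alpha_t x0 + beta_t x1 and negates every resid u is a product of
   shears, hence preserves Lebesgue measure, and it preserves the Gaussian exponent, hence the joint
   law of (X0, X1).  Therefore E[1_A(X_t) resid u] = -E[1_A(X_t) resid u] = 0. *)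

section \<open>Orthonormal bases and commuting symmetric matrices\<close>

definition orthonormal_basis :: "'a::euclidean_space set \<Rightarrow> bool" where
  "orthonormal_basis U \<longleftrightarrow> pairwise orthogonal U \<and> (\<forall>u\<in>U. norm u = 1) \<and> span U = UNIV"

lemma orthonormal_basis_finite: "orthonormal_basis U \<Longrightarrow> finite U"
  unfolding orthonormal_basis_def by (simp add: pairwise_orthogonal_imp_finite)

lemma orthonormal_basis_inner_sum:
  assumes U: "orthonormal_basis U" and u: "u \<in> U"
  shows "u \<bullet> (\<Sum>v\<in>U. g v *\<^sub>R v) = g u"
proof -
  have "u \<bullet> (\<Sum>v\<in>U. g v *\<^sub>R v) = (\<Sum>v\<in>U. g v * (u \<bullet> v))" by (simp add: inner_sum_right)
  also have "\<dots> = (\<Sum>v\<in>{u}. g v * (u \<bullet> v))"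
    using U u orthonormal_basis_finite[OF U] unfolding orthonormal_basis_def pairwise_def orthogonal_def
    by (intro sum.mono_neutral_right) auto
  also have "\<dots> = g u" using U u unfolding orthonormal_basis_def by (simp add: norm_eq_1)
  finally show ?thesis .
qed

lemma orthonormal_basis_expansion:
  assumes U: "orthonormal_basis U"
  shows "z = (\<Sum>u\<in>U. (u \<bullet> z) *\<^sub>R u)"
proof -
  define w where "w = z - (\<Sum>u\<in>U. (u \<bullet> z) *\<^sub>R u)"
  have "orthogonal w u" if "u \<in> U" for u
  proof -
    have "u \<bullet> w = 0"
      using orthonormal_basis_inner_sum[OF U that, of "\<lambda>u. u \<bullet> z"] by (simp add: w_def inner_diff_right)
    then show ?thesis by (simp add: orthogonal_def inner_commute)
  qed
  then have "orthogonal w w"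
    using U orthogonal_to_span unfolding orthonormal_basis_def by blast
  then show ?thesis by (simp add: w_def orthogonal_def)
qed

lemma orthonormal_basis_eqI:
  assumes "orthonormal_basis U" and "\<And>u. u \<in> U \<Longrightarrow> u \<bullet> x = u \<bullet> y"
  shows "x = y"
  using orthonormal_basis_expansion[OF assms(1), of x] orthonormal_basis_expansion[OF assms(1), of y]
    assms(2) by (metis (no_types, lifting) sum.cong)

lemma orthonormal_basis_parseval:
  assumes "orthonormal_basis U"
  shows "z \<bullet> z = (\<Sum>u\<in>U. (u \<bullet> z)\<^sup>2)"
proof -
  have "z \<bullet> z = z \<bullet> (\<Sum>u\<in>U. (u \<bullet> z) *\<^sub>R u)"
    using orthonormal_basis_expansion[OF assms, of z] by metis
  also have "\<dots> = (\<Sum>u\<in>U. (u \<bullet> z)\<^sup>2)"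
    by (simp add: inner_sum_right power2_eq_square inner_commute)
  finally show ?thesis .
qed

lemma inner_symmetric_matrix:
  fixes A :: "real^'n^'n"
  assumes "transpose A = A"
  shows "x \<bullet> (A *v y) = (A *v x) \<bullet> y"
  by (metis assms dot_lmul_matrix transpose_matrix_vector)

lemma nonneg_eq_0_if_quadratic_nonpos:
  fixes w d :: real
  assumes nonpos: "\<And>s. 2 * s * w + s\<^sup>2 * d \<le> 0" and "w \<ge> 0"
  shows "w = 0"
proof (rule ccontr)
  assume "w \<noteq> 0"
  with \<open>w \<ge> 0\<close> have w: "w > 0" by simp
  define s where "s = w / (\<bar>d\<bar> + 1)"
  have s: "s > 0" "s * \<bar>d\<bar> \<le> w"
    using w by (auto simp: s_def field_simps)
  have "s * (2 * w + s * d) \<le> 0"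
    using nonpos[of s] by (simp add: power2_eq_square algebra_simps)
  then have "2 * w + s * d \<le> 0" using s by (simp add: mult_le_0_iff)
  moreover have "- (s * \<bar>d\<bar>) \<le> s * d"
    using s mult_left_mono[of "- \<bar>d\<bar>" d s] by simp
  ultimately show False using w s by linarith
qed

lemma rayleigh_quotient_attains_max:
  fixes A :: "real^'n^'n"
  assumes V: "subspace V" and "x0 \<in> V" "x0 \<noteq> 0"
  obtains u where "u \<in> V" "u \<bullet> u = 1" "\<And>x. x \<in> V \<Longrightarrow> x \<bullet> (A *v x) \<le> (u \<bullet> (A *v u)) * (x \<bullet> x)"
proof -
  define K where "K = V \<inter> sphere 0 1"
  have normalize_in_K: "(1 / norm x) *\<^sub>R x \<in> K" if "x \<in> V" "x \<noteq> 0" for x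
    using that V by (simp add: K_def subspace_scale)
  have "compact K" unfolding K_def
    by (simp add: closed_subspace closed_Int_compact V)
  moreover have "K \<noteq> {}" using normalize_in_K assms(2,3) by blast
  moreover have "continuous_on K (\<lambda>x. x \<bullet> (A *v x))"
    by (rule continuous_on_inner[OF continuous_on_id matrix_vector_mult_linear_continuous_on])
  ultimately obtain u where uK: "u \<in> K" and umax: "\<And>y. y \<in> K \<Longrightarrow> y \<bullet> (A *v y) \<le> u \<bullet> (A *v u)"
    using continuous_attains_sup by metis
  have "x \<bullet> (A *v x) \<le> (u \<bullet> (A *v u)) * (x \<bullet> x)" if "x \<in> V" for x
  proof (cases "x = 0")
    case False
    have "(1 / norm x)\<^sup>2 * (x \<bullet> (A *v x)) \<le> u \<bullet> (A *v u)"
      using umax[OF normalize_in_K[OF that False]]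
      by (simp add: matrix_vector_mult_scaleR power2_eq_square algebra_simps)
    then show ?thesis using False
      by (simp add: field_simps power2_eq_square flip: power2_norm_eq_inner)
  qed simp
  then show ?thesis using that uK by (auto simp: K_def norm_eq_1)
qed

text \<open>The maximiser u of the Rayleigh quotient on V is an eigenvector: otherwise moving from u
  towards w = A u - l u would increase the quotient to first order.\<close>

lemma symmetric_matrix_eigenvector_in_invariant_subspace:
  fixes A :: "real^'n^'n"
  assumes sym: "transpose A = A" and V: "subspace V"
    and invariant: "\<And>x. x \<in> V \<Longrightarrow> A *v x \<in> V" and "x0 \<in> V" "x0 \<noteq> 0"
  shows "\<exists>u\<in>V. norm u = 1 \<and> A *v u = (u \<bullet> (A *v u)) *\<^sub>R u"
proof -
  obtain u where uV: "u \<in> V" and uu: "u \<bullet> u = 1"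
    and bound: "\<And>x. x \<in> V \<Longrightarrow> x \<bullet> (A *v x) \<le> (u \<bullet> (A *v u)) * (x \<bullet> x)"
    using rayleigh_quotient_attains_max[OF V assms(4,5)] by blast
  define l where "l = u \<bullet> (A *v u)"
  define w where "w = A *v u - l *\<^sub>R u"
  have wV: "w \<in> V" unfolding w_def using invariant uV V
    by (simp add: subspace_diff subspace_scale)
  have "2 * s * (w \<bullet> w) + s\<^sup>2 * (w \<bullet> (A *v w) - l * (w \<bullet> w)) \<le> 0" for s
  proof -
    have "u + s *\<^sub>R w \<in> V" using uV wV V by (simp add: subspace_add subspace_scale)
    from bound[OF this] have "l + 2 * s * (w \<bullet> (A *v u)) + s\<^sup>2 * (w \<bullet> (A *v w))
        \<le> l * (1 + 2 * s * (w \<bullet> u) + s\<^sup>2 * (w \<bullet> w))"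
      using inner_symmetric_matrix[OF sym, of u w] uu
      by (simp add: matrix_vector_right_distrib matrix_vector_mult_scaleR inner_add_left
          inner_add_right l_def power2_eq_square algebra_simps inner_commute)
    moreover have "w \<bullet> (A *v u) = w \<bullet> w + l * (w \<bullet> u)"
      by (simp add: w_def inner_diff_right inner_diff_left algebra_simps)
    ultimately show ?thesis by (simp add: algebra_simps)
  qed
  from nonneg_eq_0_if_quadratic_nonpos[OF this] have "w = 0" by simp
  then show ?thesis using uV uu by (intro bexI[of _ u]) (auto simp: w_def l_def norm_eq_1)
qed

lemma commuting_symmetric_common_eigenvector:
  fixes A B :: "real^'n^'n"
  assumes symA: "transpose A = A" and symB: "transpose B = B" and comm: "A ** B = B ** A"
    and V: "subspace V"
    and invA: "\<And>x. x \<in> V \<Longrightarrow> A *v x \<in> V" and invB: "\<And>x. x \<in> V \<Longrightarrow> B *v x \<in> V"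
    and "x0 \<in> V" "x0 \<noteq> 0"
  shows "\<exists>u\<in>V. norm u = 1 \<and> A *v u = (u \<bullet> (A *v u)) *\<^sub>R u \<and> B *v u = (u \<bullet> (B *v u)) *\<^sub>R u"
proof -
  obtain u1 where u1: "u1 \<in> V" "norm u1 = 1" "A *v u1 = (u1 \<bullet> (A *v u1)) *\<^sub>R u1"
    using symmetric_matrix_eigenvector_in_invariant_subspace[OF symA V invA assms(7,8)] by blast
  define l where "l = u1 \<bullet> (A *v u1)"
  define E where "E = {x \<in> V. A *v x = l *\<^sub>R x}"
  have E: "subspace E"
    unfolding E_def subspace_def using V
    by (auto simp: subspace_0 subspace_add subspace_scale matrix_vector_right_distrib
        matrix_vector_mult_scaleR scaleR_add_right)
  have invE: "B *v x \<in> E" if "x \<in> E" for x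
  proof -
    have "A *v (B *v x) = B *v (A *v x)" by (simp add: matrix_vector_mul_assoc comm)
    also have "\<dots> = l *\<^sub>R (B *v x)" using that by (simp add: E_def matrix_vector_mult_scaleR)
    finally show ?thesis using that invB E_def by auto
  qed
  have "u1 \<in> E" "u1 \<noteq> 0" using u1 l_def E_def by auto
  then obtain u where u: "u \<in> E" "norm u = 1" "B *v u = (u \<bullet> (B *v u)) *\<^sub>R u"
    using symmetric_matrix_eigenvector_in_invariant_subspace[OF symB E invE] by blast
  then have "A *v u = l *\<^sub>R u" by (simp add: E_def)
  moreover from this have "u \<bullet> (A *v u) = l" using u(2) by (simp add: norm_eq_1)
  ultimately show ?thesis using u E_def by auto
qed

lemma symmetric_matrix_eigenvector_orthogonal_invariant:
  fixes A :: "real^'n^'n"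
  assumes "transpose A = A" and "A *v u = l *\<^sub>R u" and "u \<bullet> x = 0"
  shows "u \<bullet> (A *v x) = 0"
  using inner_symmetric_matrix[OF assms(1), of u x] assms(2,3) by simp

lemma dim_orthogonal_slice_less:
  fixes V :: "'a::euclidean_space set"
  assumes V: "subspace V" and u: "u \<in> V" "u \<noteq> 0"
  shows "dim {x \<in> V. u \<bullet> x = 0} < dim V"
proof (rule dim_psubset)
  have "subspace {x \<in> V. u \<bullet> x = 0}"
    using V by (auto simp: subspace_def inner_add_right)
  moreover have "u \<notin> {x \<in> V. u \<bullet> x = 0}" using u(2) by simp
  then have "{x \<in> V. u \<bullet> x = 0} \<subset> V" using u(1) by blast
  ultimately show "span {x \<in> V. u \<bullet> x = 0} \<subset> span V"
    using V by (metis span_eq_iff)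
qed

lemma span_insert_orthogonal_slice:
  fixes V :: "'a::euclidean_space set"
  assumes V: "subspace V" and u: "u \<in> V" "u \<bullet> u = 1" and U: "span U = {x \<in> V. u \<bullet> x = 0}"
  shows "span (insert u U) = V"
proof
  show "span (insert u U) \<subseteq> V"
    using V u U span_superset[of U] by (intro span_minimal) auto
  show "V \<subseteq> span (insert u U)"
  proof
    fix x assume x: "x \<in> V"
    have "x - (u \<bullet> x) *\<^sub>R u \<in> span U"
      using x u V by (simp add: U inner_diff_right subspace_diff subspace_scale)
    then have "x - (u \<bullet> x) *\<^sub>R u \<in> span (insert u U)"
      using span_mono[of U "insert u U"] by auto
    moreover have "(u \<bullet> x) *\<^sub>R u \<in> span (insert u U)" by (simp add: span_base span_scale)
    ultimately show "x \<in> span (insert u U)" using span_add by fastforce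
  qed
qed

lemma commuting_symmetric_common_eigenbasis:
  fixes A B :: "real^'n^'n"
  assumes symA: "transpose A = A" and symB: "transpose B = B" and comm: "A ** B = B ** A"
  obtains U where "orthonormal_basis U"
    and "\<And>u. u \<in> U \<Longrightarrow> A *v u = (u \<bullet> (A *v u)) *\<^sub>R u \<and> B *v u = (u \<bullet> (B *v u)) *\<^sub>R u"
proof -
  define eigen where "eigen u \<longleftrightarrow> norm u = 1 \<and> A *v u = (u \<bullet> (A *v u)) *\<^sub>R u
    \<and> B *v u = (u \<bullet> (B *v u)) *\<^sub>R u" for u :: "real^'n"
  have "\<exists>U\<subseteq>V. pairwise orthogonal U \<and> (\<forall>u\<in>U. eigen u) \<and> span U = V"
    if "subspace V" "\<And>x. x \<in> V \<Longrightarrow> A *v x \<in> V" "\<And>x. x \<in> V \<Longrightarrow> B *v x \<in> V" for V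
    using that
  proof (induction "dim V" arbitrary: V rule: less_induct)
    case less
    show ?case
    proof (cases "V \<subseteq> {0}")
      case True
      then show ?thesis using less.prems(1) span_empty subspace_0 by (intro exI[of _ "{}"]) auto
    next
      case False
      then obtain x0 where "x0 \<in> V" "x0 \<noteq> 0" by blast
      then obtain u where u: "u \<in> V" "eigen u"
        using commuting_symmetric_common_eigenvector[OF symA symB comm less.prems] eigen_def by blast
      then have uu: "u \<bullet> u = 1" and u0: "u \<noteq> 0" by (auto simp: eigen_def norm_eq_1)
      define V' where "V' = {x \<in> V. u \<bullet> x = 0}"
      have "subspace V'"
        using less.prems(1) by (auto simp: V'_def subspace_def inner_add_right)
      moreover have "A *v x \<in> V'" "B *v x \<in> V'" if "x \<in> V'" for x
        using that less.prems u symmetric_matrix_eigenvector_orthogonal_invariant[OF symA]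
          symmetric_matrix_eigenvector_orthogonal_invariant[OF symB]
        by (auto simp: V'_def eigen_def)
      moreover have "dim V' < dim V"
        unfolding V'_def by (rule dim_orthogonal_slice_less[OF less.prems(1) u(1) u0])
      ultimately obtain U' where U': "U' \<subseteq> V'" "pairwise orthogonal U'" "\<forall>u\<in>U'. eigen u"
        "span U' = V'"
        using less.hyps by blast
      have "pairwise orthogonal (insert u U')"
        using U'(1,2) by (auto simp: pairwise_insert V'_def orthogonal_def inner_commute)
      moreover have "span (insert u U') = V"
        using span_insert_orthogonal_slice[OF less.prems(1) u(1) uu] U'(4) by (simp add: V'_def)
      ultimately show ?thesis using u U' V'_def by (intro exI[of _ "insert u U'"]) auto
    qed
  qed
  then obtain U where "pairwise orthogonal U" "\<forall>u\<in>U. eigen u" "span U = UNIV"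
    using subspace_UNIV by blast
  then show ?thesis using that by (auto simp: orthonormal_basis_def eigen_def)
qed

section \<open>Matrices with a prescribed orthonormal eigenbasis\<close>

definition spectral_matrix :: "(real^'n) set \<Rightarrow> (real^'n \<Rightarrow> real) \<Rightarrow> real^'n^'n" where
  "spectral_matrix U k = (\<chi> i j. \<Sum>u\<in>U. k u * u$i * u$j)"

lemma spectral_matrix_mult_vector: "spectral_matrix U k *v z = (\<Sum>u\<in>U. (k u * (u \<bullet> z)) *\<^sub>R u)"
proof (rule vec_eq_iff[THEN iffD2], rule allI)
  fix i
  have "(spectral_matrix U k *v z) $ i = (\<Sum>j\<in>UNIV. (\<Sum>u\<in>U. k u * u$i * u$j) * z$j)"
    by (simp add: spectral_matrix_def matrix_vector_mult_def)
  also have "\<dots> = (\<Sum>u\<in>U. \<Sum>j\<in>UNIV. k u * u$i * u$j * z$j)"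
    by (simp add: sum_distrib_right sum.swap[of _ UNIV U])
  also have "\<dots> = (\<Sum>u\<in>U. k u * (u \<bullet> z) * u$i)"
    by (simp add: inner_vec_def sum_distrib_left mult_ac)
  finally show "(spectral_matrix U k *v z) $ i = (\<Sum>u\<in>U. (k u * (u \<bullet> z)) *\<^sub>R u) $ i"
    by (simp add: sum_component)
qed

lemma inner_spectral_matrix:
  "orthonormal_basis U \<Longrightarrow> u \<in> U \<Longrightarrow> u \<bullet> (spectral_matrix U k *v z) = k u * (u \<bullet> z)"
  by (simp add: spectral_matrix_mult_vector orthonormal_basis_inner_sum)

lemma spectral_matrix_eigenvector:
  assumes U: "orthonormal_basis U" and u: "u \<in> U"
  shows "spectral_matrix U k *v u = k u *\<^sub>R u"
proof (rule orthonormal_basis_eqI[OF U])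
  fix w assume "w \<in> U"
  then show "w \<bullet> (spectral_matrix U k *v u) = w \<bullet> (k u *\<^sub>R u)"
    using U u by (cases "w = u")
      (auto simp: inner_spectral_matrix orthonormal_basis_def pairwise_def orthogonal_def norm_eq_1)
qed

lemma spectral_matrix_eqI:
  assumes U: "orthonormal_basis U" and eigen: "\<And>u. u \<in> U \<Longrightarrow> A *v u = k u *\<^sub>R u"
  shows "A = spectral_matrix U k"
proof -
  have "A *v z = spectral_matrix U k *v z" for z
  proof -
    have "A *v z = A *v (\<Sum>u\<in>U. (u \<bullet> z) *\<^sub>R u)" using orthonormal_basis_expansion[OF U] by metis
    also have "\<dots> = (\<Sum>u\<in>U. (u \<bullet> z) *\<^sub>R (A *v u))"
      by (simp add: vec.sum matrix_scaleR_vector_ac scaleR_matrix_vector_assoc)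
    also have "\<dots> = (\<Sum>u\<in>U. (k u * (u \<bullet> z)) *\<^sub>R u)"
      using eigen by (intro sum.cong) (auto simp: mult.commute)
    finally show ?thesis by (simp add: spectral_matrix_mult_vector)
  qed
  then show ?thesis by (simp add: matrix_eq)
qed

lemma spectral_matrix_cong: "(\<And>u. u \<in> U \<Longrightarrow> k u = l u) \<Longrightarrow> spectral_matrix U k = spectral_matrix U l"
  unfolding spectral_matrix_def by (simp add: vec_eq_iff)

lemma spectral_matrix_mult:
  "orthonormal_basis U \<Longrightarrow> spectral_matrix U k ** spectral_matrix U l = spectral_matrix U (\<lambda>u. k u * l u)"
  by (rule spectral_matrix_eqI)
    (auto simp: matrix_vector_mul_assoc[symmetric] spectral_matrix_eigenvector matrix_vector_mult_scaleR)

lemma spectral_matrix_add: "spectral_matrix U k + spectral_matrix U l = spectral_matrix U (\<lambda>u. k u + l u)"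
  by (simp add: spectral_matrix_def vec_eq_iff sum.distrib algebra_simps)

lemma scaleR_spectral_matrix: "c *\<^sub>R spectral_matrix U k = spectral_matrix U (\<lambda>u. c * k u)"
  by (simp add: spectral_matrix_def vec_eq_iff sum_distrib_left algebra_simps)

lemma mat_1_eq_spectral_matrix: "orthonormal_basis U \<Longrightarrow> mat 1 = spectral_matrix U (\<lambda>u. 1)"
  by (rule spectral_matrix_eqI) auto

lemma transpose_spectral_matrix: "transpose (spectral_matrix U k) = spectral_matrix U k"
  by (simp add: spectral_matrix_def transpose_def vec_eq_iff mult.commute mult.left_commute)

lemma matrix_inv_spectral_matrix:
  assumes U: "orthonormal_basis U" and nonzero: "\<And>u. u \<in> U \<Longrightarrow> k u \<noteq> 0"
  shows "matrix_inv (spectral_matrix U k) = spectral_matrix U (\<lambda>u. 1 / k u)"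
proof -
  let ?A = "spectral_matrix U k" and ?N = "spectral_matrix U (\<lambda>u. 1 / k u)"
  have r: "?A ** ?N = mat 1" and l: "?N ** ?A = mat 1"
    using nonzero by (auto simp: spectral_matrix_mult[OF U] mat_1_eq_spectral_matrix[OF U]
        intro!: spectral_matrix_cong)
  have inv: "?A ** matrix_inv ?A = mat 1 \<and> matrix_inv ?A ** ?A = mat 1"
    unfolding matrix_inv_def by (rule someI[of _ ?N]) (use r l in blast)
  have "matrix_inv ?A = matrix_inv ?A ** (?A ** ?N)" using r by (simp add: matrix_mul_rid)
  also have "\<dots> = ?N" using inv by (simp add: matrix_mul_assoc matrix_mul_lid)
  finally show ?thesis .
qed

lemma quadratic_form_spectral_matrix:
  "orthonormal_basis U \<Longrightarrow> z \<bullet> (spectral_matrix U k *v z) = (\<Sum>u\<in>U. k u * (u \<bullet> z)\<^sup>2)"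
  by (simp add: spectral_matrix_mult_vector inner_sum_right power2_eq_square inner_commute mult.assoc)

lemma pos_def_spectral_matrix:
  fixes U :: "(real^'n) set"
  assumes U: "orthonormal_basis U" and pos: "\<And>u. u \<in> U \<Longrightarrow> k u > 0"
  shows "pos_def_mat (spectral_matrix U k)"
  unfolding pos_def_mat_def
proof (intro conjI allI impI transpose_spectral_matrix)
  fix x :: "real^'n" assume "x \<noteq> 0"
  then obtain u where u: "u \<in> U" "u \<bullet> x \<noteq> 0"
    using orthonormal_basis_eqI[OF U, of x 0] by auto
  have "0 < k u * (u \<bullet> x)\<^sup>2" using u pos by simp
  also have "\<dots> \<le> (\<Sum>v\<in>U. k v * (v \<bullet> x)\<^sup>2)"
    using orthonormal_basis_finite[OF U] u pos by (intro member_le_sum) (auto simp: less_imp_le)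
  finally show "0 < x \<bullet> (spectral_matrix U k *v x)" by (simp add: quadratic_form_spectral_matrix[OF U])
qed

lemma pos_def_mat_plus_nonneg_injective:
  assumes "pos_def_mat R" "c \<ge> 0" "(R + c *\<^sub>R mat 1) *v w = 0"
  shows "w = 0"
proof (rule ccontr)
  assume "w \<noteq> 0"
  then have "0 < w \<bullet> (R *v w)" using assms(1) unfolding pos_def_mat_def by blast
  moreover have "w \<bullet> ((R + c *\<^sub>R mat 1) *v w) = w \<bullet> (R *v w) + c * (w \<bullet> w)"
    by (simp add: matrix_vector_mult_add_rdistrib scaleR_matrix_vector_assoc[symmetric] inner_add_right)
  moreover have "0 \<le> c * (w \<bullet> w)" using assms(2) by simp
  ultimately show False using assms(3) by simp
qed

text \<open>Uniqueness of the root: if R is a positive definite root and k u = s * s with s \<ge> 0, then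
  (R + s I)(R u - s u) = (R R - s s) u = 0, and R + s I is injective.\<close>

lemma mat_sqrt_spectral_matrix:
  assumes U: "orthonormal_basis U" and pos: "\<And>u. u \<in> U \<Longrightarrow> k u > 0"
  shows "mat_sqrt (spectral_matrix U k) = spectral_matrix U (\<lambda>u. sqrt (k u))"
  unfolding mat_sqrt_def
proof (rule the_equality)
  show "pos_def_mat (spectral_matrix U (\<lambda>u. sqrt (k u))) \<and>
      spectral_matrix U (\<lambda>u. sqrt (k u)) ** spectral_matrix U (\<lambda>u. sqrt (k u)) = spectral_matrix U k"
    using pos by (auto simp: pos_def_spectral_matrix[OF U] spectral_matrix_mult[OF U] abs_of_pos
        intro!: spectral_matrix_cong)
  fix R assume R: "pos_def_mat R \<and> R ** R = spectral_matrix U k"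
  show "R = spectral_matrix U (\<lambda>u. sqrt (k u))"
  proof (rule spectral_matrix_eqI[OF U])
    fix u assume u: "u \<in> U"
    define s where "s = sqrt (k u)"
    have s: "s \<ge> 0" "s * s = k u" using pos[OF u] by (auto simp: s_def)
    have "(R + s *\<^sub>R mat 1) *v (R *v u - s *\<^sub>R u) = (R ** R) *v u - (s * s) *\<^sub>R u"
      by (simp add: matrix_vector_mult_add_rdistrib scaleR_matrix_vector_assoc[symmetric]
          matrix_vector_mul_assoc[symmetric] vec.diff matrix_scaleR_vector_ac[symmetric] algebra_simps)
    also have "\<dots> = 0" using R s by (simp add: spectral_matrix_eigenvector[OF U u])
    finally have "R *v u - s *\<^sub>R u = 0" using pos_def_mat_plus_nonneg_injective s R by blast
    then show "R *v u = sqrt (k u) *\<^sub>R u" by (simp add: s_def)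
  qed
qed

lemma commuting_pos_def_simultaneous_spectral:
  fixes S0 S1 :: "real^'n^'n"
  assumes pd0: "pos_def_mat S0" and pd1: "pos_def_mat S1" and comm: "S0 ** S1 = S1 ** S0"
  obtains U lam mu where "orthonormal_basis U" "\<And>u. u \<in> U \<Longrightarrow> lam u > 0" "\<And>u. u \<in> U \<Longrightarrow> mu u > 0"
    "S0 = spectral_matrix U lam" "S1 = spectral_matrix U mu"
proof -
  have "transpose S0 = S0" "transpose S1 = S1"
    using pd0 pd1 unfolding pos_def_mat_def by auto
  then obtain U where U: "orthonormal_basis U" and eigen: "\<And>u. u \<in> U \<Longrightarrow>
      S0 *v u = (u \<bullet> (S0 *v u)) *\<^sub>R u \<and> S1 *v u = (u \<bullet> (S1 *v u)) *\<^sub>R u"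
    using commuting_symmetric_common_eigenbasis[OF _ _ comm] by metis
  define lam where "lam u = u \<bullet> (S0 *v u)" for u
  define mu where "mu u = u \<bullet> (S1 *v u)" for u
  have "u \<noteq> 0" if "u \<in> U" for u using U that unfolding orthonormal_basis_def by auto
  then have "lam u > 0" "mu u > 0" if "u \<in> U" for u
    using pd0 pd1 that unfolding pos_def_mat_def lam_def mu_def by blast+
  moreover have "S0 = spectral_matrix U lam" "S1 = spectral_matrix U mu"
    using eigen by (auto simp: lam_def mu_def intro!: spectral_matrix_eqI[OF U])
  ultimately show ?thesis using that[OF U] by blast
qed

lemma spectral_interpolation_velocity:
  assumes U: "orthonormal_basis U" and nonzero: "\<And>u. u \<in> U \<Longrightarrow> a\<^sup>2 * lam u + b\<^sup>2 * mu u \<noteq> 0"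
  shows "(1/2) *\<^sub>R (((2 * a * a') *\<^sub>R spectral_matrix U lam + (2 * b * b') *\<^sub>R spectral_matrix U mu)
      ** matrix_inv (a\<^sup>2 *\<^sub>R spectral_matrix U lam + b\<^sup>2 *\<^sub>R spectral_matrix U mu))
    = spectral_matrix U (\<lambda>u. (a * a' * lam u + b * b' * mu u) / (a\<^sup>2 * lam u + b\<^sup>2 * mu u))"
proof -
  have "(1/2) *\<^sub>R (((2 * a * a') *\<^sub>R spectral_matrix U lam + (2 * b * b') *\<^sub>R spectral_matrix U mu)
      ** matrix_inv (a\<^sup>2 *\<^sub>R spectral_matrix U lam + b\<^sup>2 *\<^sub>R spectral_matrix U mu))
    = spectral_matrix U (\<lambda>u. (1/2) * ((2 * a * a' * lam u + 2 * b * b' * mu u)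
        * (1 / (a\<^sup>2 * lam u + b\<^sup>2 * mu u))))"
    by (simp add: scaleR_spectral_matrix spectral_matrix_add matrix_inv_spectral_matrix[OF U nonzero]
        spectral_matrix_mult[OF U])
  also have "\<dots> = spectral_matrix U (\<lambda>u. (a * a' * lam u + b * b' * mu u) / (a\<^sup>2 * lam u + b\<^sup>2 * mu u))"
    by (rule spectral_matrix_cong) (frule nonzero, simp add: field_simps)
  finally show ?thesis .
qed

lemma spectral_interpolation_sqrt_ratio:
  assumes U: "orthonormal_basis U" and lam: "\<And>u. u \<in> U \<Longrightarrow> lam u > 0"
    and pos: "\<And>u. u \<in> U \<Longrightarrow> a\<^sup>2 * lam u + b\<^sup>2 * mu u > 0"
  shows "mat_sqrt (a\<^sup>2 *\<^sub>R spectral_matrix U lam + b\<^sup>2 *\<^sub>R spectral_matrix U mu)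
      ** matrix_inv (mat_sqrt (spectral_matrix U lam))
    = spectral_matrix U (\<lambda>u. sqrt (a\<^sup>2 * lam u + b\<^sup>2 * mu u) / sqrt (lam u))"
proof -
  have "matrix_inv (spectral_matrix U (\<lambda>u. sqrt (lam u))) = spectral_matrix U (\<lambda>u. 1 / sqrt (lam u))"
    by (rule matrix_inv_spectral_matrix[OF U]) (use lam in force)
  then show ?thesis
    by (simp add: scaleR_spectral_matrix spectral_matrix_add mat_sqrt_spectral_matrix[OF U lam]
        mat_sqrt_spectral_matrix[OF U pos] spectral_matrix_mult[OF U])
qed

section \<open>Linear vector fields that are diagonal in a fixed basis\<close>

lemma has_real_derivative_inner_right:
  "(g has_vector_derivative g') F \<Longrightarrow> ((\<lambda>s. u \<bullet> g s) has_real_derivative (u \<bullet> g')) F"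
  unfolding has_real_derivative_iff_has_vector_derivative
  by (rule bounded_linear.has_vector_derivative[OF bounded_linear_inner_right])

lemma sqrt_has_real_derivative_comp:
  assumes "(c has_real_derivative c') (at t within S)" "c t > 0"
  shows "((\<lambda>s. sqrt (c s)) has_real_derivative c' / (2 * c t) * sqrt (c t)) (at t within S)"
proof -
  have eq: "c' / (2 * c t) * sqrt (c t) = inverse (sqrt (c t)) / 2 * c'"
    using assms(2) by (simp add: field_simps)
  show ?thesis
    unfolding eq by (rule DERIV_chain2[OF DERIV_real_sqrt[OF assms(2)] assms(1)])
qed

lemma sqrt_scaled_ode_unique:
  fixes c c' y :: "real \<Rightarrow> real"
  assumes S: "convex S" "s0 \<in> S" "t \<in> S"
    and c_pos: "\<And>s. s \<in> S \<Longrightarrow> c s > 0"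
    and c_deriv: "\<And>s. s \<in> S \<Longrightarrow> (c has_real_derivative c' s) (at s within S)"
    and y_deriv: "\<And>s. s \<in> S \<Longrightarrow> (y has_real_derivative c' s / (2 * c s) * y s) (at s within S)"
  shows "y t = sqrt (c t) / sqrt (c s0) * y s0"
proof -
  define q where "q s = y s / sqrt (c s)" for s
  have "(q has_real_derivative 0) (at s within S)" if s: "s \<in> S" for s
  proof -
    have pos: "sqrt (c s) > 0" using c_pos[OF s] by simp
    have "(q has_real_derivative
        (c' s / (2 * c s) * y s * sqrt (c s) - y s * (c' s / (2 * c s) * sqrt (c s)))
          / (sqrt (c s) * sqrt (c s))) (at s within S)"
      unfolding q_def using pos
      by (intro DERIV_divide y_deriv[OF s] sqrt_has_real_derivative_comp c_deriv[OF s] c_pos[OF s]) auto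
    then show ?thesis by (simp add: algebra_simps)
  qed
  then obtain k where "\<And>s. s \<in> S \<Longrightarrow> q s = k"
    using has_field_derivative_zero_constant[OF S(1)] by metis
  then have "q t = q s0" using S by simp
  then show ?thesis using c_pos[OF S(2)] c_pos[OF S(3)] by (simp add: q_def field_simps)
qed

locale spectral_linear_field =
  fixes U :: "(real^'n) set" and S :: "real set"
    and c c' :: "real \<Rightarrow> real^'n \<Rightarrow> real" and m m' :: "real \<Rightarrow> real^'n"
  assumes U: "orthonormal_basis U"
    and c_pos: "\<And>t u. t \<in> S \<Longrightarrow> u \<in> U \<Longrightarrow> c t u > 0"
    and c_deriv: "\<And>t u. t \<in> S \<Longrightarrow> u \<in> U \<Longrightarrow> ((\<lambda>s. c s u) has_real_derivative c' t u) (at t within S)"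
    and m_deriv: "\<And>t. t \<in> S \<Longrightarrow> (m has_vector_derivative m' t) (at t within S)"
begin

definition field :: "real \<Rightarrow> real^'n \<Rightarrow> real^'n" where
  "field t y = m' t + spectral_matrix U (\<lambda>u. c' t u / (2 * c t u)) *v (y - m t)"

definition flow :: "real \<Rightarrow> real \<Rightarrow> real^'n \<Rightarrow> real^'n" where
  "flow s0 t x = m t + spectral_matrix U (\<lambda>u. sqrt (c t u) / sqrt (c s0 u)) *v (x - m s0)"

lemma inner_field: "u \<in> U \<Longrightarrow> u \<bullet> field t y = u \<bullet> m' t + c' t u / (2 * c t u) * (u \<bullet> (y - m t))"
  by (simp add: field_def inner_add_right inner_spectral_matrix[OF U])

lemma inner_flow: "u \<in> U \<Longrightarrow> u \<bullet> flow s0 t x = u \<bullet> m t + sqrt (c t u) / sqrt (c s0 u) * (u \<bullet> (x - m s0))"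
  by (simp add: flow_def inner_add_right inner_spectral_matrix[OF U])

lemma flow_start:
  assumes "s0 \<in> S"
  shows "flow s0 s0 x = x"
proof -
  have "spectral_matrix U (\<lambda>u. sqrt (c s0 u) / sqrt (c s0 u)) = spectral_matrix U (\<lambda>u. 1)"
    by (rule spectral_matrix_cong) (use c_pos[OF assms] in force)
  then have "spectral_matrix U (\<lambda>u. sqrt (c s0 u) / sqrt (c s0 u)) = mat 1"
    by (simp add: mat_1_eq_spectral_matrix[OF U])
  then show ?thesis by (simp add: flow_def)
qed

lemma flow_has_vector_derivative:
  assumes "s0 \<in> S" "t \<in> S"
  shows "((\<lambda>s. flow s0 s x) has_vector_derivative field t (flow s0 t x)) (at t within S)"
proof -
  define a where "a u = (u \<bullet> (x - m s0)) / sqrt (c s0 u)" for u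
  have flow_eq: "flow s0 s x = m s + (\<Sum>u\<in>U. (sqrt (c s u) * a u) *\<^sub>R u)" for s
    by (simp add: flow_def spectral_matrix_mult_vector a_def)
  have "((\<lambda>s. flow s0 s x) has_vector_derivative
      m' t + (\<Sum>u\<in>U. (c' t u / (2 * c t u) * sqrt (c t u) * a u) *\<^sub>R u)) (at t within S)"
    unfolding flow_eq
    by (intro has_vector_derivative_add m_deriv[OF assms(2)] has_vector_derivative_sum
        has_vector_derivative_scaleR[OF _ has_vector_derivative_const, simplified]
        DERIV_cmult_right sqrt_has_real_derivative_comp c_deriv[OF assms(2)] c_pos[OF assms(2)])
  moreover have "m' t + (\<Sum>u\<in>U. (c' t u / (2 * c t u) * sqrt (c t u) * a u) *\<^sub>R u) = field t (flow s0 t x)"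
    by (rule orthonormal_basis_eqI[OF U])
      (simp add: inner_add_right inner_diff_right orthonormal_basis_inner_sum[OF U] inner_field
        inner_flow a_def)
  ultimately show ?thesis by simp
qed

lemma flow_unique:
  assumes S: "convex S" "s0 \<in> S" "t \<in> S"
    and g: "\<And>s. s \<in> S \<Longrightarrow> (g has_vector_derivative field s (g s)) (at s within S)"
  shows "g t = flow s0 t (g s0)"
proof (rule orthonormal_basis_eqI[OF U])
  fix u assume u: "u \<in> U"
  have "(\<lambda>s. u \<bullet> (g s - m s)) t = sqrt (c t u) / sqrt (c s0 u) * (\<lambda>s. u \<bullet> (g s - m s)) s0"
  proof (rule sqrt_scaled_ode_unique[OF S c_pos c_deriv])
    fix s assume s: "s \<in> S"
    have "((\<lambda>s. u \<bullet> (g s - m s)) has_real_derivative u \<bullet> (field s (g s) - m' s)) (at s within S)"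
      by (intro has_real_derivative_inner_right has_vector_derivative_diff g m_deriv s)
    then show "((\<lambda>s. u \<bullet> (g s - m s)) has_real_derivative
        c' s u / (2 * c s u) * (u \<bullet> (g s - m s))) (at s within S)"
      by (simp add: inner_field[OF u] inner_diff_right)
  qed (use u in auto)
  then show "u \<bullet> g t = u \<bullet> flow s0 t (g s0)"
    by (simp add: inner_flow[OF u] inner_diff_right algebra_simps)
qed

end

locale commuting_gaussian_path =
  fixes U :: "(real^'n) set" and lam mu :: "real^'n \<Rightarrow> real"
    and \<alpha> \<beta> \<alpha>' \<beta>' :: "real \<Rightarrow> real" and m0 m1 :: "real^'n"
  assumes U: "orthonormal_basis U" and lam: "\<And>u. u \<in> U \<Longrightarrow> lam u > 0"
    and mu: "\<And>u. u \<in> U \<Longrightarrow> mu u > 0"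
    and start: "\<alpha> 0 = 1" "\<beta> 0 = 0" and ab: "\<And>t. t \<in> {0..1} \<Longrightarrow> \<alpha> t \<noteq> 0 \<or> \<beta> t \<noteq> 0"
    and \<alpha>: "\<And>t. t \<in> {0..1} \<Longrightarrow> (\<alpha> has_real_derivative \<alpha>' t) (at t within {0..1})"
    and \<beta>: "\<And>t. t \<in> {0..1} \<Longrightarrow> (\<beta> has_real_derivative \<beta>' t) (at t within {0..1})"
begin

definition var :: "real \<Rightarrow> real^'n \<Rightarrow> real" where
  "var t u = (\<alpha> t)\<^sup>2 * lam u + (\<beta> t)\<^sup>2 * mu u"

definition var' :: "real \<Rightarrow> real^'n \<Rightarrow> real" where
  "var' t u = 2 * (\<alpha> t * \<alpha>' t * lam u + \<beta> t * \<beta>' t * mu u)"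

definition mean :: "real \<Rightarrow> real^'n" where
  "mean t = \<alpha> t *\<^sub>R m0 + \<beta> t *\<^sub>R m1"

definition mean' :: "real \<Rightarrow> real^'n" where
  "mean' t = \<alpha>' t *\<^sub>R m0 + \<beta>' t *\<^sub>R m1"

sublocale spectral_linear_field U "{0..1}" var var' mean mean'
proof
  show "var t u > 0" if "t \<in> {0..1}" "u \<in> U" for t u
    using ab[OF that(1)] lam[OF that(2)] mu[OF that(2)]
    by (auto simp: var_def add_pos_nonneg add_nonneg_pos)
  show "((\<lambda>s. var s u) has_real_derivative var' t u) (at t within {0..1})" if "t \<in> {0..1}" for t u
    using \<alpha>[OF that] \<beta>[OF that]
    by (auto simp: var_def var'_def algebra_simps intro!: derivative_eq_intros)
  show "(mean has_vector_derivative mean' t) (at t within {0..1})" if "t \<in> {0..1}" for t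
    unfolding mean_def[abs_def] mean'_def
    using has_vector_derivative_add[OF has_vector_derivative_scaleR[OF \<alpha>[OF that] has_vector_derivative_const]
        has_vector_derivative_scaleR[OF \<beta>[OF that] has_vector_derivative_const]]
    by simp
qed (fact U)

lemma field_eq_regression:
  "field t = (\<lambda>y. mean' t + spectral_matrix U
     (\<lambda>u. (\<alpha> t * \<alpha>' t * lam u + \<beta> t * \<beta>' t * mu u) / var t u) *v (y - mean t))"
proof -
  have "var' t u / (2 * var t u) = (\<alpha> t * \<alpha>' t * lam u + \<beta> t * \<beta>' t * mu u) / var t u" for u
    unfolding var'_def by (rule mult_divide_mult_cancel_left) simp
  then show ?thesis by (simp add: field_def fun_eq_iff)
qed

lemma velocity_eq_field:
  assumes t: "t \<in> {0..1}"
  shows "\<alpha>' t *\<^sub>R m0 + \<beta>' t *\<^sub>R m1 + (1/2) *\<^sub>R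
      ((((2 * \<alpha> t * \<alpha>' t) *\<^sub>R spectral_matrix U lam + (2 * \<beta> t * \<beta>' t) *\<^sub>R spectral_matrix U mu)
        ** matrix_inv ((\<alpha> t)\<^sup>2 *\<^sub>R spectral_matrix U lam + (\<beta> t)\<^sup>2 *\<^sub>R spectral_matrix U mu))
       *v (y - (\<alpha> t *\<^sub>R m0 + \<beta> t *\<^sub>R m1)))
    = field t y"
proof -
  have "(\<alpha> t)\<^sup>2 * lam u + (\<beta> t)\<^sup>2 * mu u \<noteq> 0" if "u \<in> U" for u
    using c_pos[OF t that] by (simp add: var_def)
  from spectral_interpolation_velocity[OF U this, where a' = "\<alpha>' t" and b' = "\<beta>' t"] show ?thesis
    by (simp add: field_eq_regression mean_def mean'_def var_def scaleR_matrix_vector_assoc)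
qed

lemma transport_eq_flow:
  assumes t: "t \<in> {0..1}"
  shows "\<alpha> t *\<^sub>R m0 + \<beta> t *\<^sub>R m1 + (mat_sqrt ((\<alpha> t)\<^sup>2 *\<^sub>R spectral_matrix U lam
      + (\<beta> t)\<^sup>2 *\<^sub>R spectral_matrix U mu) ** matrix_inv (mat_sqrt (spectral_matrix U lam))) *v (x - m0)
    = flow 0 t x"
proof -
  have "(\<alpha> t)\<^sup>2 * lam u + (\<beta> t)\<^sup>2 * mu u > 0" if "u \<in> U" for u
    using c_pos[OF t that] by (simp add: var_def)
  with U lam have "mat_sqrt ((\<alpha> t)\<^sup>2 *\<^sub>R spectral_matrix U lam + (\<beta> t)\<^sup>2 *\<^sub>R spectral_matrix U mu)
      ** matrix_inv (mat_sqrt (spectral_matrix U lam))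
    = spectral_matrix U (\<lambda>u. sqrt ((\<alpha> t)\<^sup>2 * lam u + (\<beta> t)\<^sup>2 * mu u) / sqrt (lam u))"
    by (rule spectral_interpolation_sqrt_ratio)
  then show ?thesis
    unfolding flow_def by (simp add: var_def mean_def start)
qed

end

section \<open>Gaussian laws and a measure preserving reflection\<close>

lemma nn_integral_lborel_affine:
  fixes h :: "'a::euclidean_space \<Rightarrow> ennreal" and c :: real
  assumes c: "c \<noteq> 0" and h[measurable]: "h \<in> borel_measurable borel"
  shows "(\<integral>\<^sup>+x. h (t + c *\<^sub>R x) \<partial>lborel) = ennreal (1 / \<bar>c\<bar> ^ DIM('a)) * (\<integral>\<^sup>+x. h x \<partial>lborel)"
proof -
  define K where "K = \<bar>c\<bar> ^ DIM('a)"
  have K: "K > 0" using c by (simp add: K_def)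
  have "(\<integral>\<^sup>+x. h x \<partial>lborel)
      = (\<integral>\<^sup>+x. h x \<partial>density (distr lborel borel (\<lambda>x::'a. t + c *\<^sub>R x)) (\<lambda>_. ennreal K))"
    unfolding K_def by (subst lborel_affine[OF c, of t]) (rule refl)
  also have "\<dots> = ennreal K * (\<integral>\<^sup>+x. h (t + c *\<^sub>R x) \<partial>lborel)"
    by (simp add: nn_integral_density nn_integral_distr nn_integral_cmult)
  finally have "ennreal (1 / K) * (\<integral>\<^sup>+x. h x \<partial>lborel)
      = ennreal (1 / K) * ennreal K * (\<integral>\<^sup>+x. h (t + c *\<^sub>R x) \<partial>lborel)"
    by (simp add: mult.assoc)
  also have "ennreal (1 / K) * ennreal K = 1" using K by (simp flip: ennreal_mult)
  finally show ?thesis by (simp add: K_def)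
qed

lemma nn_integral_pair_lborel_shear_fst:
  fixes g :: "'a::euclidean_space \<times> 'b::euclidean_space \<Rightarrow> ennreal" and t :: "'b \<Rightarrow> 'a"
  assumes c: "c \<noteq> 0" and g[measurable]: "g \<in> borel_measurable (lborel \<Otimes>\<^sub>M lborel)"
    and t[measurable]: "t \<in> borel_measurable borel"
  shows "(\<integral>\<^sup>+z. g (t (snd z) + c *\<^sub>R fst z, snd z) \<partial>(lborel \<Otimes>\<^sub>M lborel))
       = ennreal (1 / \<bar>c\<bar> ^ DIM('a)) * (\<integral>\<^sup>+z. g z \<partial>(lborel \<Otimes>\<^sub>M lborel))"
proof -
  have "(\<integral>\<^sup>+z. g (t (snd z) + c *\<^sub>R fst z, snd z) \<partial>(lborel \<Otimes>\<^sub>M lborel))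
      = (\<integral>\<^sup>+y. (\<integral>\<^sup>+x. g (t y + c *\<^sub>R x, y) \<partial>lborel) \<partial>lborel)"
    by (subst lborel_pair.nn_integral_snd[symmetric]) simp_all
  also have "\<dots> = (\<integral>\<^sup>+y. ennreal (1 / \<bar>c\<bar> ^ DIM('a)) * (\<integral>\<^sup>+x. g (x, y) \<partial>lborel) \<partial>lborel)"
    by (intro nn_integral_cong nn_integral_lborel_affine[OF c]) measurable
  also have "\<dots> = ennreal (1 / \<bar>c\<bar> ^ DIM('a)) * (\<integral>\<^sup>+z. g z \<partial>(lborel \<Otimes>\<^sub>M lborel))"
    by (simp add: nn_integral_cmult lborel_pair.nn_integral_snd)
  finally show ?thesis .
qed

lemma nn_integral_pair_lborel_shear_snd:
  fixes g :: "'a::euclidean_space \<times> 'b::euclidean_space \<Rightarrow> ennreal" and t :: "'a \<Rightarrow> 'b"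
  assumes c: "c \<noteq> 0" and g[measurable]: "g \<in> borel_measurable (lborel \<Otimes>\<^sub>M lborel)"
    and t[measurable]: "t \<in> borel_measurable borel"
  shows "(\<integral>\<^sup>+z. g (fst z, t (fst z) + c *\<^sub>R snd z) \<partial>(lborel \<Otimes>\<^sub>M lborel))
       = ennreal (1 / \<bar>c\<bar> ^ DIM('b)) * (\<integral>\<^sup>+z. g z \<partial>(lborel \<Otimes>\<^sub>M lborel))"
proof -
  have "(\<integral>\<^sup>+z. g (fst z, t (fst z) + c *\<^sub>R snd z) \<partial>(lborel \<Otimes>\<^sub>M lborel))
      = (\<integral>\<^sup>+x. (\<integral>\<^sup>+y. g (x, t x + c *\<^sub>R y) \<partial>lborel) \<partial>lborel)"
    by (subst lborel.nn_integral_fst[symmetric]) simp_all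
  also have "\<dots> = (\<integral>\<^sup>+x. ennreal (1 / \<bar>c\<bar> ^ DIM('b)) * (\<integral>\<^sup>+y. g (x, y) \<partial>lborel) \<partial>lborel)"
    by (intro nn_integral_cong nn_integral_lborel_affine[OF c]) measurable
  also have "\<dots> = ennreal (1 / \<bar>c\<bar> ^ DIM('b)) * (\<integral>\<^sup>+z. g z \<partial>(lborel \<Otimes>\<^sub>M lborel))"
    by (simp add: nn_integral_cmult lborel.nn_integral_fst)
  finally show ?thesis .
qed

lemma distr_density_eq_if_invariant:
  fixes R :: "'a \<Rightarrow> 'a" and rho :: "'a \<Rightarrow> ennreal"
  assumes R[measurable]: "R \<in> L \<rightarrow>\<^sub>M L" and rho[measurable]: "rho \<in> borel_measurable L"
    and preserving: "\<And>g. g \<in> borel_measurable L \<Longrightarrow> (\<integral>\<^sup>+z. g (R z) \<partial>L) = (\<integral>\<^sup>+z. g z \<partial>L)"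
    and invariant: "\<And>z. z \<in> space L \<Longrightarrow> rho (R z) = rho z"
  shows "distr (density L rho) L R = density L rho"
proof (rule measure_eqI)
  fix A assume "A \<in> sets (distr (density L rho) L R)"
  then have A[measurable]: "A \<in> sets L" by simp
  have "emeasure (distr (density L rho) L R) A = (\<integral>\<^sup>+z. rho z * indicator (R -` A \<inter> space L) z \<partial>L)"
    by (simp add: emeasure_distr emeasure_density)
  also have "\<dots> = (\<integral>\<^sup>+z. rho (R z) * indicator A (R z) \<partial>L)"
    by (intro nn_integral_cong) (auto simp: invariant indicator_def)
  also have "\<dots> = (\<integral>\<^sup>+z. rho z * indicator A z \<partial>L)"
    by (rule preserving) measurable
  also have "\<dots> = emeasure (density L rho) A"
    by (simp add: emeasure_density)
  finally show "emeasure (distr (density L rho) L R) A = emeasure (density L rho) A" .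
qed simp

lemma integral_eq_0_if_odd:
  fixes H :: "'a \<Rightarrow> 'b::{banach, second_countable_topology}"
  assumes R[measurable]: "R \<in> D \<rightarrow>\<^sub>M L" and H[measurable]: "H \<in> borel_measurable L"
    and preserving: "distr D L R = D" and odd: "\<And>z. z \<in> space D \<Longrightarrow> H (R z) = - H z"
  shows "integral\<^sup>L D H = 0"
proof -
  have "integral\<^sup>L D H = integral\<^sup>L (distr D L R) H" using preserving by simp
  also have "\<dots> = integral\<^sup>L D (\<lambda>z. H (R z))" by (rule integral_distr) measurable
  also have "\<dots> = - integral\<^sup>L D H"
    by (subst Bochner_Integration.integral_cong[OF refl odd]) simp_all
  finally have "integral\<^sup>L D H + integral\<^sup>L D H = 0" by (simp add: eq_neg_iff_add_eq_0)
  then show ?thesis by (simp flip: scaleR_2)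
qed

definition mahalanobis_sq :: "'a::real_inner set \<Rightarrow> ('a \<Rightarrow> real) \<Rightarrow> 'a \<Rightarrow> real" where
  "mahalanobis_sq U lam z = (\<Sum>u\<in>U. (u \<bullet> z)\<^sup>2 / lam u)"

lemma borel_measurable_mahalanobis_sq[measurable]:
  "mahalanobis_sq U lam \<in> borel_measurable (borel :: 'a::euclidean_space measure)"
  unfolding mahalanobis_sq_def by measurable

lemma mahalanobis_sq_scaleR: "mahalanobis_sq U lam (c *\<^sub>R z) = c\<^sup>2 * mahalanobis_sq U lam z"
  by (simp add: mahalanobis_sq_def sum_distrib_left power_mult_distrib)

lemma norm_le_exp_mahalanobis_sq:
  assumes U: "orthonormal_basis U" and lam: "\<And>u. u \<in> U \<Longrightarrow> lam u > 0"
  defines "L \<equiv> 1 + (\<Sum>u\<in>U. lam u)"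
  shows "norm z \<le> 2 * sqrt L * exp (mahalanobis_sq U lam z / 4)"
proof -
  have L: "lam u \<le> L" if "u \<in> U" for u
    using orthonormal_basis_finite[OF U] that lam member_le_sum[of u U lam]
    by (simp add: L_def less_imp_le)
  have L_pos: "L > 0"
    unfolding L_def using lam by (simp add: add_pos_nonneg less_imp_le sum_nonneg)
  have "(norm z)\<^sup>2 / L = (\<Sum>u\<in>U. (u \<bullet> z)\<^sup>2 / L)"
    by (simp add: power2_norm_eq_inner orthonormal_basis_parseval[OF U] sum_divide_distrib)
  also have "\<dots> \<le> mahalanobis_sq U lam z"
    unfolding mahalanobis_sq_def using lam L L_pos by (intro sum_mono divide_left_mono) auto
  finally have bound: "(norm z)\<^sup>2 / (4 * L) \<le> mahalanobis_sq U lam z / 4" by simp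
  define y where "y = norm z / (2 * sqrt L)"
  have "y \<le> 1 + y\<^sup>2" using sum_power2_ge_zero[of "y - 1/2" 0] by (simp add: power2_eq_square algebra_simps)
  also have "\<dots> \<le> exp (y\<^sup>2)" by (rule exp_ge_add_one_self)
  also have "y\<^sup>2 = (norm z)\<^sup>2 / (4 * L)" using L_pos by (simp add: y_def power_divide power_mult_distrib)
  finally have "y \<le> exp (mahalanobis_sq U lam z / 4)" using bound by (meson exp_le_cancel_iff order_trans)
  then show ?thesis using L_pos by (simp add: y_def field_simps)
qed

lemma gaussian_spectral_matrix:
  fixes U :: "(real^'n) set"
  assumes U: "orthonormal_basis U" and lam: "\<And>u. u \<in> U \<Longrightarrow> lam u > 0"
  shows "gaussian m (spectral_matrix U lam) = density lborel (\<lambda>x. ennreal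
    (exp (- (1/2) * mahalanobis_sq U lam (x - m)) / sqrt ((2 * pi) ^ CARD('n) * det (spectral_matrix U lam))))"
proof -
  have "matrix_inv (spectral_matrix U lam) = spectral_matrix U (\<lambda>u. 1 / lam u)"
    using lam by (intro matrix_inv_spectral_matrix[OF U]) (metis less_irrefl)
  then show ?thesis
    by (simp add: gaussian_def quadratic_form_spectral_matrix[OF U] mahalanobis_sq_def)
qed

text \<open>The normalising constant is positive because the density has total mass 1; this avoids
  computing the determinant.\<close>

lemma gaussian_law_density:
  fixes X :: "'w \<Rightarrow> real^'n" and U :: "(real^'n) set"
  assumes P: "prob_space M" and X[measurable]: "X \<in> borel_measurable M"
    and law: "distr M borel X = gaussian m (spectral_matrix U lam)"
    and U: "orthonormal_basis U" and lam: "\<And>u. u \<in> U \<Longrightarrow> lam u > 0"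
  obtains Z where "Z > 0"
    "distr M borel X = density lborel (\<lambda>x. ennreal (exp (- (1/2) * mahalanobis_sq U lam (x - m)) / Z))"
    "(\<integral>\<^sup>+x. ennreal (exp (- (1/2) * mahalanobis_sq U lam (x - m)) / Z) \<partial>lborel) = 1"
proof -
  define Z where "Z = sqrt ((2 * pi) ^ CARD('n) * det (spectral_matrix U lam))"
  define e where "e x = exp (- (1/2) * mahalanobis_sq U lam (x - m))" for x
  have density: "distr M borel X = density lborel (\<lambda>x. ennreal (e x / Z))"
    unfolding law e_def Z_def by (rule gaussian_spectral_matrix[OF U lam])
  then have "prob_space (density lborel (\<lambda>x. ennreal (e x / Z)))"
    using prob_space.prob_space_distr[OF P X] by simp
  from prob_space.emeasure_space_1[OF this]
  have one: "(\<integral>\<^sup>+x. ennreal (e x / Z) \<partial>lborel) = 1"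
    by (simp add: emeasure_density e_def)
  have "Z > 0"
  proof (rule ccontr)
    assume "\<not> Z > 0"
    then have "ennreal (e x / Z) = 0" for x
      by (simp add: e_def divide_nonneg_nonpos ennreal_eq_0_iff)
    with one show False by simp
  qed
  with density one show ?thesis using that by (simp add: e_def)
qed

lemma integrable_exp_quarter_mahalanobis_sq:
  fixes m :: "'a::euclidean_space"
  assumes Z: "Z > 0" and one: "(\<integral>\<^sup>+x. ennreal (exp (- (1/2) * mahalanobis_sq U lam (x - m)) / Z) \<partial>lborel) = 1"
  shows "integrable lborel (\<lambda>x. exp (- (1/4) * mahalanobis_sq U lam (x - m)))"
proof (rule integrableI_nonneg)
  define h where "h x = exp (- (1/4) * mahalanobis_sq U lam (x - m))" for x :: 'a
  \<comment> \<open>Substituting x = m + sqrt 2 y turns h into Z times the normalised density.\<close>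
  have "ennreal (1 / \<bar>sqrt 2\<bar> ^ DIM('a)) * (\<integral>\<^sup>+x. ennreal (h x) \<partial>lborel)
      = (\<integral>\<^sup>+y. ennreal (h (m + sqrt 2 *\<^sub>R y)) \<partial>lborel)"
    by (rule nn_integral_lborel_affine[symmetric]) (auto simp: h_def)
  also have "\<dots> = (\<integral>\<^sup>+y. ennreal Z * ennreal (exp (- (1/2) * mahalanobis_sq U lam ((m + 1 *\<^sub>R y) - m)) / Z) \<partial>lborel)"
    using Z by (intro nn_integral_cong) (simp add: h_def mahalanobis_sq_scaleR flip: ennreal_mult)
  also have "\<dots> = ennreal Z * (\<integral>\<^sup>+y. ennreal (exp (- (1/2) * mahalanobis_sq U lam ((m + 1 *\<^sub>R y) - m)) / Z) \<partial>lborel)"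
    by (rule nn_integral_cmult) measurable
  also have "(\<integral>\<^sup>+y. ennreal (exp (- (1/2) * mahalanobis_sq U lam ((m + 1 *\<^sub>R y) - m)) / Z) \<partial>lborel) = 1"
    using nn_integral_lborel_affine[of 1 "\<lambda>x. ennreal (exp (- (1/2) * mahalanobis_sq U lam (x - m)) / Z)" m] one
    by simp
  finally have "ennreal (1 / \<bar>sqrt 2\<bar> ^ DIM('a)) * (\<integral>\<^sup>+x. ennreal (h x) \<partial>lborel) < \<infinity>"
    by simp
  then show "(\<integral>\<^sup>+x. ennreal (exp (- (1/4) * mahalanobis_sq U lam (x - m))) \<partial>lborel) < \<infinity>"
    by (auto simp: ennreal_mult_less_top h_def)
qed auto

lemma integrable_gaussian:
  fixes X :: "'w \<Rightarrow> real^'n" and U :: "(real^'n) set"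
  assumes P: "prob_space M" and X[measurable]: "X \<in> borel_measurable M"
    and law: "distr M borel X = gaussian m (spectral_matrix U lam)"
    and U: "orthonormal_basis U" and lam: "\<And>u. u \<in> U \<Longrightarrow> lam u > 0"
  shows "integrable M X"
proof -
  obtain Z where Z: "Z > 0"
    and density: "distr M borel X = density lborel (\<lambda>x. ennreal (exp (- (1/2) * mahalanobis_sq U lam (x - m)) / Z))"
    and one: "(\<integral>\<^sup>+x. ennreal (exp (- (1/2) * mahalanobis_sq U lam (x - m)) / Z) \<partial>lborel) = 1"
    using gaussian_law_density[OF P X law U lam] by blast
  define phi where "phi x = exp (- (1/2) * mahalanobis_sq U lam (x - m)) / Z" for x
  define h where "h x = exp (- (1/4) * mahalanobis_sq U lam (x - m))" for x :: "real^'n"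
  define L where "L = 1 + (\<Sum>u\<in>U. lam u)"
  have [measurable]: "phi \<in> borel_measurable borel" "h \<in> borel_measurable borel"
    unfolding phi_def h_def by measurable
  have int_phi: "integrable lborel phi"
    by (rule integrableI_nonneg) (use one Z in \<open>auto simp: phi_def\<close>)
  have int_h: "integrable lborel h"
    unfolding h_def by (rule integrable_exp_quarter_mahalanobis_sq[OF Z one])
  have majorant: "integrable lborel (\<lambda>x. phi x * norm m + 2 * sqrt L / Z * h x)"
    using int_phi int_h by (intro Bochner_Integration.integrable_add integrable_mult_left integrable_mult_right)
  have "integrable lborel (\<lambda>x. phi x *\<^sub>R x)"
  proof (rule Bochner_Integration.integrable_bound[OF majorant], measurable, rule AE_I2)
    fix x :: "real^'n"
    have phi: "phi x \<ge> 0" using Z by (simp add: phi_def)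
    have "phi x * norm (x - m) \<le> phi x * (2 * sqrt L * exp (mahalanobis_sq U lam (x - m) / 4))"
      using phi norm_le_exp_mahalanobis_sq[OF U lam] by (simp add: L_def mult_left_mono)
    also have "\<dots> = 2 * sqrt L / Z * h x"
      by (simp add: phi_def h_def field_simps flip: exp_add)
    finally have "phi x * norm (x - m) \<le> 2 * sqrt L / Z * h x" .
    moreover have "norm (phi x *\<^sub>R x) \<le> phi x * norm m + phi x * norm (x - m)"
      using phi mult_left_mono[OF norm_triangle_sub[of x m] phi] by (simp add: algebra_simps)
    ultimately show "norm (phi x *\<^sub>R x) \<le> norm (phi x * norm m + 2 * sqrt L / Z * h x)"
      by simp
  qed
  then have "integrable (distr M borel X) (\<lambda>x. x)"
    using Z by (simp add: density phi_def integrable_density)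
  then show ?thesis by (simp add: integrable_distr_eq)
qed

lemma weighted_reflection_norm:
  fixes a b l m p q :: real
  assumes "l \<noteq> 0" "m \<noteq> 0" "a\<^sup>2 * l + b\<^sup>2 * m \<noteq> 0"
  defines "s \<equiv> 2 * (b * m * p - a * l * q) / (a\<^sup>2 * l + b\<^sup>2 * m)"
  shows "(p - b * s)\<^sup>2 / l + (q + a * s)\<^sup>2 / m = p\<^sup>2 / l + q\<^sup>2 / m"
proof -
  have "s * (a\<^sup>2 * l + b\<^sup>2 * m) = 2 * (b * m * p - a * l * q)"
    using assms(3) by (simp add: s_def)
  then have "s * (s * (b\<^sup>2 * m + a\<^sup>2 * l) - 2 * (b * m * p - a * l * q)) / (l * m) = 0"
    by (simp add: algebra_simps)
  moreover have "(p - b * s)\<^sup>2 / l + (q + a * s)\<^sup>2 / m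
      = p\<^sup>2 / l + q\<^sup>2 / m + s * (s * (b\<^sup>2 * m + a\<^sup>2 * l) - 2 * (b * m * p - a * l * q)) / (l * m)"
    using assms(1,2) by (simp add: field_simps power2_eq_square)
  ultimately show ?thesis by simp
qed

lemma weighted_reflection_resid:
  fixes a b l m p q :: real
  assumes "a\<^sup>2 * l + b\<^sup>2 * m \<noteq> 0"
  defines "s \<equiv> 2 * (b * m * p - a * l * q) / (a\<^sup>2 * l + b\<^sup>2 * m)"
  shows "b * m * (p - b * s) - a * l * (q + a * s) = - (b * m * p - a * l * q)"
proof -
  have "b * m * (p - b * s) - a * l * (q + a * s) = (b * m * p - a * l * q) - s * (a\<^sup>2 * l + b\<^sup>2 * m)"
    by (simp add: algebra_simps power2_eq_square)
  also have "s * (a\<^sup>2 * l + b\<^sup>2 * m) = 2 * (b * m * p - a * l * q)"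
    using assms(1) by (simp add: s_def)
  finally show ?thesis by simp
qed

locale gaussian_reflection =
  fixes U :: "(real^'n) set" and lam mu :: "real^'n \<Rightarrow> real" and m0 m1 :: "real^'n" and a b :: real
  assumes U: "orthonormal_basis U" and lam: "\<And>u. u \<in> U \<Longrightarrow> lam u > 0"
    and mu: "\<And>u. u \<in> U \<Longrightarrow> mu u > 0" and ab: "a \<noteq> 0 \<or> b \<noteq> 0"
begin

definition interp_var :: "real^'n \<Rightarrow> real" where
  "interp_var u = a\<^sup>2 * lam u + b\<^sup>2 * mu u"

definition resid :: "real^'n \<Rightarrow> (real^'n) \<times> (real^'n) \<Rightarrow> real" where
  "resid u z = b * mu u * (u \<bullet> (fst z - m0)) - a * lam u * (u \<bullet> (snd z - m1))"

definition shift :: "real^'n \<Rightarrow> (real^'n) \<times> (real^'n) \<Rightarrow> real" where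
  "shift u z = 2 * resid u z / interp_var u"

definition reflect :: "(real^'n) \<times> (real^'n) \<Rightarrow> (real^'n) \<times> (real^'n)" where
  "reflect z = (fst z - (\<Sum>u\<in>U. (b * shift u z) *\<^sub>R u), snd z + (\<Sum>u\<in>U. (a * shift u z) *\<^sub>R u))"

definition exponent :: "(real^'n) \<times> (real^'n) \<Rightarrow> real" where
  "exponent z = mahalanobis_sq U lam (fst z - m0) + mahalanobis_sq U mu (snd z - m1)"

text \<open>The conditional mean of X1 given a X0 + b X1 = y.\<close>

definition cond_mean :: "real^'n \<Rightarrow> real^'n" where
  "cond_mean y = (\<Sum>u\<in>U. ((b * mu u * (u \<bullet> y - a * (u \<bullet> m0)) + a\<^sup>2 * lam u * (u \<bullet> m1)) / interp_var u) *\<^sub>R u)"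

lemma interp_var_pos: "u \<in> U \<Longrightarrow> interp_var u > 0"
  using ab lam[of u] mu[of u]
  by (auto simp: interp_var_def add_pos_nonneg add_nonneg_pos)

lemma inner_fst_reflect: "u \<in> U \<Longrightarrow> u \<bullet> (fst (reflect z) - m0) = u \<bullet> (fst z - m0) - b * shift u z"
  by (simp add: reflect_def inner_diff_right orthonormal_basis_inner_sum[OF U])

lemma inner_snd_reflect: "u \<in> U \<Longrightarrow> u \<bullet> (snd (reflect z) - m1) = u \<bullet> (snd z - m1) + a * shift u z"
  by (simp add: reflect_def inner_diff_right inner_add_right orthonormal_basis_inner_sum[OF U])

lemma resid_reflect: "u \<in> U \<Longrightarrow> resid u (reflect z) = - resid u z"
  using weighted_reflection_resid[of a "lam u" b "mu u"] interp_var_pos[of u]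
  by (simp add: resid_def inner_fst_reflect inner_snd_reflect shift_def interp_var_def)

lemma exponent_reflect: "exponent (reflect z) = exponent z"
proof -
  have "(u \<bullet> (fst (reflect z) - m0))\<^sup>2 / lam u + (u \<bullet> (snd (reflect z) - m1))\<^sup>2 / mu u
      = (u \<bullet> (fst z - m0))\<^sup>2 / lam u + (u \<bullet> (snd z - m1))\<^sup>2 / mu u" if u: "u \<in> U" for u
    using weighted_reflection_norm[of "lam u" "mu u" a b] lam[OF u] mu[OF u] interp_var_pos[OF u]
    by (simp add: inner_fst_reflect[OF u] inner_snd_reflect[OF u] shift_def resid_def interp_var_def)
  then show ?thesis
    by (simp add: exponent_def mahalanobis_sq_def flip: sum.distrib)
qed

lemma interp_reflect: "a *\<^sub>R fst (reflect z) + b *\<^sub>R snd (reflect z) = a *\<^sub>R fst z + b *\<^sub>R snd z"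
proof -
  have "a *\<^sub>R (\<Sum>u\<in>U. (b * shift u z) *\<^sub>R u) = b *\<^sub>R (\<Sum>u\<in>U. (a * shift u z) *\<^sub>R u)"
    by (simp add: scaleR_sum_right mult.left_commute)
  then show ?thesis by (simp add: reflect_def algebra_simps)
qed

lemma snd_reflect: "snd (reflect z) = 2 *\<^sub>R cond_mean (a *\<^sub>R fst z + b *\<^sub>R snd z) - snd z"
proof (rule orthonormal_basis_eqI[OF U])
  fix u assume u: "u \<in> U"
  have "interp_var u \<noteq> 0" using interp_var_pos[OF u] by simp
  then show "u \<bullet> snd (reflect z) = u \<bullet> (2 *\<^sub>R cond_mean (a *\<^sub>R fst z + b *\<^sub>R snd z) - snd z)"
    using inner_snd_reflect[OF u, of z]
    by (simp add: cond_mean_def orthonormal_basis_inner_sum[OF U u] shift_def resid_def interp_var_def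
        inner_diff_right inner_add_right field_simps power2_eq_square)
qed

lemma fst_reflect:
  assumes "a \<noteq> 0"
  shows "fst (reflect z) = (1 / a) *\<^sub>R (a *\<^sub>R fst z + b *\<^sub>R snd z - b *\<^sub>R snd (reflect z))"
proof -
  have "fst (reflect z) = (1 / a) *\<^sub>R (a *\<^sub>R fst (reflect z))" using assms by simp
  also have "a *\<^sub>R fst (reflect z) = a *\<^sub>R fst z + b *\<^sub>R snd z - b *\<^sub>R snd (reflect z)"
    using interp_reflect[of z] by (simp add: eq_diff_eq)
  finally show ?thesis .
qed

lemma reflect_if_a_0:
  assumes "a = 0"
  shows "reflect z = (2 *\<^sub>R m0 + (- 1) *\<^sub>R fst z, snd z)"
proof -
  have "u \<bullet> fst (reflect z) = u \<bullet> (2 *\<^sub>R m0 + (- 1) *\<^sub>R fst z)" if u: "u \<in> U" for u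
  proof -
    have "b * shift u z = 2 * (u \<bullet> (fst z - m0))"
      using ab mu[OF u] assms unfolding shift_def resid_def interp_var_def
      by (simp add: field_simps power2_eq_square)
    then show ?thesis using inner_fst_reflect[OF u, of z] by (simp add: inner_diff_right)
  qed
  then have "fst (reflect z) = 2 *\<^sub>R m0 + (- 1) *\<^sub>R fst z"
    by (rule orthonormal_basis_eqI[OF U])
  moreover have "snd (reflect z) = snd z"
    unfolding reflect_def using assms by simp
  ultimately show ?thesis by (simp add: prod_eq_iff)
qed

lemma reflect_measurable[measurable]: "reflect \<in> (lborel \<Otimes>\<^sub>M lborel) \<rightarrow>\<^sub>M (lborel \<Otimes>\<^sub>M lborel)"
  unfolding reflect_def shift_def resid_def by measurable

text \<open>For a \<noteq> 0, reflect is the composition of the shears (x0, x1) \<mapsto> (a x0 + b x1, x1),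
  (y, x1) \<mapsto> (y, 2 cond_mean y - x1) and (y, x1) \<mapsto> ((y - b x1) / a, x1), whose Jacobians
  multiply to 1.\<close>

lemma nn_integral_reflect_shears:
  assumes a: "a \<noteq> 0" and g[measurable]: "g \<in> borel_measurable (lborel \<Otimes>\<^sub>M lborel)"
  shows "(\<integral>\<^sup>+z. g (reflect z) \<partial>(lborel \<Otimes>\<^sub>M lborel)) = (\<integral>\<^sup>+z. g z \<partial>(lborel \<Otimes>\<^sub>M lborel))"
proof -
  define G2 where "G2 z = g ((1 / a) *\<^sub>R (fst z - b *\<^sub>R snd z), snd z)" for z
  define G1 where "G1 z = G2 (fst z, 2 *\<^sub>R cond_mean (fst z) - snd z)" for z
  have cond_mean[measurable]: "cond_mean \<in> borel_measurable borel"
    unfolding cond_mean_def by measurable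
  have [measurable]: "G2 \<in> borel_measurable (lborel \<Otimes>\<^sub>M lborel)"
    unfolding G2_def by measurable
  have [measurable]: "G1 \<in> borel_measurable (lborel \<Otimes>\<^sub>M lborel)"
    unfolding G1_def by measurable
  have G1_shear: "g (reflect z) = G1 ((\<lambda>x. b *\<^sub>R x) (snd z) + a *\<^sub>R fst z, snd z)" for z
  proof -
    have "g (reflect z) = g (fst (reflect z), snd (reflect z))" by simp
    then show ?thesis
      unfolding fst_reflect[OF a, of z] snd_reflect[of z] by (simp add: G1_def G2_def add.commute)
  qed
  have G2_shear: "G2 z = g ((\<lambda>x. (- b / a) *\<^sub>R x) (snd z) + (1 / a) *\<^sub>R fst z, snd z)" for z
    by (simp add: G2_def scaleR_diff_right)
  have "(\<integral>\<^sup>+z. g (reflect z) \<partial>(lborel \<Otimes>\<^sub>M lborel))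
      = ennreal (1 / \<bar>a\<bar> ^ DIM(real^'n)) * (\<integral>\<^sup>+z. G1 z \<partial>(lborel \<Otimes>\<^sub>M lborel))"
    unfolding G1_shear by (rule nn_integral_pair_lborel_shear_fst[OF a]) simp_all
  also have "(\<integral>\<^sup>+z. G1 z \<partial>(lborel \<Otimes>\<^sub>M lborel)) = (\<integral>\<^sup>+z. G2 z \<partial>(lborel \<Otimes>\<^sub>M lborel))"
    using nn_integral_pair_lborel_shear_snd[of "- 1" G2 "\<lambda>y. 2 *\<^sub>R cond_mean y"] by (simp add: G1_def)
  also have "\<dots> = ennreal (1 / \<bar>1 / a\<bar> ^ DIM(real^'n)) * (\<integral>\<^sup>+z. g z \<partial>(lborel \<Otimes>\<^sub>M lborel))"
    unfolding G2_shear using a by (intro nn_integral_pair_lborel_shear_fst) simp_all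
  also have "1 / \<bar>1 / a\<bar> ^ DIM(real^'n) = \<bar>a\<bar> ^ DIM(real^'n)"
    by (simp add: power_one_over)
  finally show ?thesis
    using a by (simp add: mult.assoc[symmetric] flip: ennreal_mult)
qed

lemma nn_integral_reflect:
  assumes g[measurable]: "g \<in> borel_measurable (lborel \<Otimes>\<^sub>M lborel)"
  shows "(\<integral>\<^sup>+z. g (reflect z) \<partial>(lborel \<Otimes>\<^sub>M lborel)) = (\<integral>\<^sup>+z. g z \<partial>(lborel \<Otimes>\<^sub>M lborel))"
proof (cases "a = 0")
  case True
  have "(\<integral>\<^sup>+z. g (reflect z) \<partial>(lborel \<Otimes>\<^sub>M lborel))
      = (\<integral>\<^sup>+z. g ((\<lambda>_. 2 *\<^sub>R m0) (snd z) + (- 1) *\<^sub>R fst z, snd z) \<partial>(lborel \<Otimes>\<^sub>M lborel))"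
    by (simp add: reflect_if_a_0[OF True])
  also have "\<dots> = (\<integral>\<^sup>+z. g z \<partial>(lborel \<Otimes>\<^sub>M lborel))"
    by (subst nn_integral_pair_lborel_shear_fst) auto
  finally show ?thesis .
qed (rule nn_integral_reflect_shears[OF _ g])

lemma regression_error:
  "a' *\<^sub>R x0 + b' *\<^sub>R x1 - (a' *\<^sub>R m0 + b' *\<^sub>R m1 + spectral_matrix U
      (\<lambda>u. (a * a' * lam u + b * b' * mu u) / (a\<^sup>2 * lam u + b\<^sup>2 * mu u)) *v (a *\<^sub>R x0 + b *\<^sub>R x1 - (a *\<^sub>R m0 + b *\<^sub>R m1)))
    = (\<Sum>u\<in>U. ((a' * b - a * b') / interp_var u * resid u (x0, x1)) *\<^sub>R u)"
    (is "?lhs = ?rhs")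
proof (rule orthonormal_basis_eqI[OF U])
  fix u assume u: "u \<in> U"
  have "interp_var u \<noteq> 0" using interp_var_pos[OF u] by simp
  then show "u \<bullet> ?lhs = u \<bullet> ?rhs"
    by (simp add: orthonormal_basis_inner_sum[OF U u] inner_spectral_matrix[OF U u] resid_def
        interp_var_def inner_diff_right inner_add_right field_simps power2_eq_square)
qed

lemma joint_law_density:
  fixes M :: "'w measure" and X0 X1 :: "'w \<Rightarrow> real^'n"
  assumes P: "prob_space M" and X0[measurable]: "X0 \<in> borel_measurable M"
    and X1[measurable]: "X1 \<in> borel_measurable M"
    and law0: "distr M borel X0 = gaussian m0 (spectral_matrix U lam)"
    and law1: "distr M borel X1 = gaussian m1 (spectral_matrix U mu)"
    and indep: "prob_space.indep_var M borel X0 borel X1"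
  obtains Z where "Z > 0" "distr M (borel \<Otimes>\<^sub>M borel) (\<lambda>\<omega>. (X0 \<omega>, X1 \<omega>))
    = density (lborel \<Otimes>\<^sub>M lborel) (\<lambda>z. ennreal (exp (- (1/2) * exponent z) / Z))"
proof -
  obtain Z0 where Z0: "Z0 > 0" and density0: "distr M borel X0
      = density lborel (\<lambda>x. ennreal (exp (- (1/2) * mahalanobis_sq U lam (x - m0)) / Z0))"
    using gaussian_law_density[OF P X0 law0 U lam] by blast
  obtain Z1 where Z1: "Z1 > 0" and density1: "distr M borel X1
      = density lborel (\<lambda>x. ennreal (exp (- (1/2) * mahalanobis_sq U mu (x - m1)) / Z1))"
    using gaussian_law_density[OF P X1 law1 U mu] by blast
  have "sigma_finite_measure (distr M borel X1)"
    using prob_space.prob_space_distr[OF P X1] by (simp add: prob_space_imp_sigma_finite)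
  then have "distr M (borel \<Otimes>\<^sub>M borel) (\<lambda>\<omega>. (X0 \<omega>, X1 \<omega>)) = density (lborel \<Otimes>\<^sub>M lborel)
      (\<lambda>(x, y). ennreal (exp (- (1/2) * mahalanobis_sq U lam (x - m0)) / Z0)
        * ennreal (exp (- (1/2) * mahalanobis_sq U mu (y - m1)) / Z1))"
    using prob_space.indep_var_distribution_eq[OF P, of borel X0 borel X1] indep
    by (simp add: density0 density1 pair_measure_density lborel.sigma_finite_measure_axioms)
  also have "(\<lambda>(x, y). ennreal (exp (- (1/2) * mahalanobis_sq U lam (x - m0)) / Z0)
        * ennreal (exp (- (1/2) * mahalanobis_sq U mu (y - m1)) / Z1))
      = (\<lambda>z. ennreal (exp (- (1/2) * exponent z) / (Z0 * Z1)))"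
  proof -
    have "exp (- (1/2) * mahalanobis_sq U lam (x - m0)) / Z0 * (exp (- (1/2) * mahalanobis_sq U mu (y - m1)) / Z1)
        = exp (- (1/2) * exponent (x, y)) / (Z0 * Z1)" for x y
      by (simp add: exponent_def distrib_left flip: exp_add)
    then show ?thesis
      using Z0 Z1 by (auto simp: fun_eq_iff simp flip: ennreal_mult)
  qed
  finally have "distr M (borel \<Otimes>\<^sub>M borel) (\<lambda>\<omega>. (X0 \<omega>, X1 \<omega>))
      = density (lborel \<Otimes>\<^sub>M lborel) (\<lambda>z. ennreal (exp (- (1/2) * exponent z) / (Z0 * Z1)))" .
  then show ?thesis by (rule that[rotated]) (simp add: Z0 Z1)
qed

lemma integral_indicator_resid_eq_0:
  fixes M :: "'w measure" and X0 X1 :: "'w \<Rightarrow> real^'n"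
  assumes P: "prob_space M" and X0[measurable]: "X0 \<in> borel_measurable M"
    and X1[measurable]: "X1 \<in> borel_measurable M"
    and law0: "distr M borel X0 = gaussian m0 (spectral_matrix U lam)"
    and law1: "distr M borel X1 = gaussian m1 (spectral_matrix U mu)"
    and indep: "prob_space.indep_var M borel X0 borel X1" and A[measurable]: "A \<in> sets borel"
  shows "(\<integral>\<omega>. indicator A (a *\<^sub>R X0 \<omega> + b *\<^sub>R X1 \<omega>) *\<^sub>R (\<Sum>u\<in>U. (k u * resid u (X0 \<omega>, X1 \<omega>)) *\<^sub>R u) \<partial>M) = 0"
proof -
  obtain Z where joint: "distr M (borel \<Otimes>\<^sub>M borel) (\<lambda>\<omega>. (X0 \<omega>, X1 \<omega>))
      = density (lborel \<Otimes>\<^sub>M lborel) (\<lambda>z. ennreal (exp (- (1/2) * exponent z) / Z))"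
    using joint_law_density[OF P X0 X1 law0 law1 indep] by blast
  define rho where "rho z = ennreal (exp (- (1/2) * exponent z) / Z)" for z
  have [measurable]: "rho \<in> borel_measurable (lborel \<Otimes>\<^sub>M lborel)"
    unfolding rho_def exponent_def by measurable
  define H where "H z = indicator A (a *\<^sub>R fst z + b *\<^sub>R snd z) *\<^sub>R (\<Sum>u\<in>U. (k u * resid u z) *\<^sub>R u)"
    for z :: "(real^'n) \<times> (real^'n)"
  have [measurable]: "H \<in> borel_measurable (borel \<Otimes>\<^sub>M borel)"
    unfolding H_def resid_def by measurable
  then have [measurable]: "H \<in> borel_measurable (lborel \<Otimes>\<^sub>M lborel)" by simp
  have "distr (density (lborel \<Otimes>\<^sub>M lborel) rho) (lborel \<Otimes>\<^sub>M lborel) reflect = density (lborel \<Otimes>\<^sub>M lborel) rho"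
    by (rule distr_density_eq_if_invariant) (auto simp: nn_integral_reflect rho_def exponent_reflect)
  moreover have "H (reflect z) = - H z" for z
    by (simp add: H_def interp_reflect resid_reflect sum_negf cong: sum.cong)
  ultimately have "integral\<^sup>L (density (lborel \<Otimes>\<^sub>M lborel) rho) H = 0"
    by (intro integral_eq_0_if_odd[where R = reflect]) auto
  moreover have "(\<integral>\<omega>. H (X0 \<omega>, X1 \<omega>) \<partial>M) = integral\<^sup>L (distr M (borel \<Otimes>\<^sub>M borel) (\<lambda>\<omega>. (X0 \<omega>, X1 \<omega>))) H"
    by (rule integral_distr[symmetric]) measurable
  ultimately show ?thesis by (simp add: H_def joint rho_def[abs_def])
qed

end

lemma cond_exp_gaussian_interpolant:
  fixes M :: "'w measure" and X0 X1 :: "'w \<Rightarrow> real^'n" and U :: "(real^'n) set"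
  assumes P: "prob_space M" and X0[measurable]: "X0 \<in> borel_measurable M"
    and X1[measurable]: "X1 \<in> borel_measurable M"
    and law0: "distr M borel X0 = gaussian m0 (spectral_matrix U lam)"
    and law1: "distr M borel X1 = gaussian m1 (spectral_matrix U mu)"
    and indep: "prob_space.indep_var M borel X0 borel X1"
    and U: "orthonormal_basis U" and lam: "\<And>u. u \<in> U \<Longrightarrow> lam u > 0"
    and mu: "\<And>u. u \<in> U \<Longrightarrow> mu u > 0" and ab: "a \<noteq> 0 \<or> b \<noteq> 0"
  shows "is_cond_exp_given M (\<lambda>\<omega>. a *\<^sub>R X0 \<omega> + b *\<^sub>R X1 \<omega>) (\<lambda>\<omega>. a' *\<^sub>R X0 \<omega> + b' *\<^sub>R X1 \<omega>)
    (\<lambda>y. (a' *\<^sub>R m0 + b' *\<^sub>R m1) + spectral_matrix U (\<lambda>u. (a * a' * lam u + b * b' * mu u)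
       / (a\<^sup>2 * lam u + b\<^sup>2 * mu u)) *v (y - (a *\<^sub>R m0 + b *\<^sub>R m1)))"
    (is "is_cond_exp_given M ?X ?Y ?g")
proof -
  have int_X0: "integrable M X0" using P X0 law0 U lam by (rule integrable_gaussian)
  have int_X1: "integrable M X1" using P X1 law1 U mu by (rule integrable_gaussian)
  interpret gaussian_reflection U lam mu m0 m1 a b
    using U lam mu ab by unfold_locales auto
  have [measurable]: "?g \<in> borel_measurable borel"
    by (simp add: spectral_matrix_mult_vector)
  have int_Y: "integrable M ?Y"
    using int_X0 int_X1 by (intro Bochner_Integration.integrable_add integrable_scaleR_right)
  have int_g: "integrable M (\<lambda>\<omega>. ?g (?X \<omega>))"
    using int_X0 int_X1 prob_space.finite_measure[OF P]
    by (intro Bochner_Integration.integrable_add Bochner_Integration.integrable_diff integrable_scaleR_right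
        finite_measure.integrable_const integrable_bounded_linear[OF matrix_vector_mul_bounded_linear])
  show ?thesis
    unfolding is_cond_exp_given_def
  proof (intro conjI ballI int_Y int_g)
    fix A :: "(real^'n) set" assume A[measurable]: "A \<in> sets borel"
    have "integrable M (\<lambda>\<omega>. indicator A (?X \<omega>) *\<^sub>R ?Y \<omega>)"
      by (rule Bochner_Integration.integrable_bound[OF int_Y]) (measurable, auto simp: indicator_def)
    moreover have "integrable M (\<lambda>\<omega>. indicator A (?X \<omega>) *\<^sub>R ?g (?X \<omega>))"
      by (rule Bochner_Integration.integrable_bound[OF int_g]) (measurable, auto simp: indicator_def)
    ultimately have "(\<integral>\<omega>. indicator A (?X \<omega>) *\<^sub>R ?Y \<omega> \<partial>M) - (\<integral>\<omega>. indicator A (?X \<omega>) *\<^sub>R ?g (?X \<omega>) \<partial>M)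
        = (\<integral>\<omega>. indicator A (?X \<omega>) *\<^sub>R (?Y \<omega> - ?g (?X \<omega>)) \<partial>M)"
      by (simp add: scaleR_diff_right)
    also have "\<dots> = 0"
      unfolding regression_error by (rule integral_indicator_resid_eq_0[OF P X0 X1 law0 law1 indep A])
    finally show "(\<integral>\<omega>. indicator A (?X \<omega>) *\<^sub>R ?Y \<omega> \<partial>M) = (\<integral>\<omega>. indicator A (?X \<omega>) *\<^sub>R ?g (?X \<omega>) \<partial>M)"
      by simp
  qed measurable
qed

theorem proposition5:
  fixes M :: "'w measure"
    and X0 X1 :: "'w \<Rightarrow> real^'n"
    and m0 m1 :: "real^'n" and S0 S1 :: "real^'n^'n"
    and \<alpha> \<beta> \<alpha>' \<beta>' \<alpha>'' \<beta>'' :: "real \<Rightarrow> real"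
    and m mdot :: "real \<Rightarrow> real^'n"
    and S Sdot :: "real \<Rightarrow> real^'n^'n"
    and v :: "real \<Rightarrow> real^'n \<Rightarrow> real^'n"
    and f :: "real \<Rightarrow> real^'n \<Rightarrow> real^'n"
  assumes "prob_space M"
    and "X0 \<in> borel_measurable M" and "X1 \<in> borel_measurable M"
    and "distr M borel X0 = gaussian m0 S0"
    and "distr M borel X1 = gaussian m1 S1"
    and "prob_space.indep_var M borel X0 borel X1"
    and "pos_def_mat S0" and "pos_def_mat S1" and "S0 ** S1 = S1 ** S0"
    and "\<forall>t\<in>{0..1}. (\<alpha> has_real_derivative \<alpha>' t) (at t within {0..1})"
    and "\<forall>t\<in>{0..1}. (\<alpha>' has_real_derivative \<alpha>'' t) (at t within {0..1})"
    and "continuous_on {0..1} \<alpha>''"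
    and "\<forall>t\<in>{0..1}. (\<beta> has_real_derivative \<beta>' t) (at t within {0..1})"
    and "\<forall>t\<in>{0..1}. (\<beta>' has_real_derivative \<beta>'' t) (at t within {0..1})"
    and "continuous_on {0..1} \<beta>''"
    and "\<alpha> 0 = 1" and "\<beta> 1 = 1" and "\<alpha> 1 = 0" and "\<beta> 0 = 0"
    and "\<forall>t\<in>{0<..<1}. \<alpha> t > 0 \<and> \<beta> t > 0"
  defines "m \<equiv> \<lambda>t. \<alpha> t *\<^sub>R m0 + \<beta> t *\<^sub>R m1"
    and "mdot \<equiv> \<lambda>t. \<alpha>' t *\<^sub>R m0 + \<beta>' t *\<^sub>R m1"
    and "S \<equiv> \<lambda>t. (\<alpha> t)\<^sup>2 *\<^sub>R S0 + (\<beta> t)\<^sup>2 *\<^sub>R S1"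
    and "Sdot \<equiv> \<lambda>t. (2 * \<alpha> t * \<alpha>' t) *\<^sub>R S0 + (2 * \<beta> t * \<beta>' t) *\<^sub>R S1"
    and "v \<equiv> \<lambda>t x. mdot t + (1/2) *\<^sub>R ((Sdot t ** matrix_inv (S t)) *v (x - m t))"
    and "f \<equiv> \<lambda>t x. m t + (mat_sqrt (S t) ** matrix_inv (mat_sqrt S0)) *v (x - m0)"
  shows
    "(\<forall>t\<in>{0..1}. is_cond_exp_given M (\<lambda>\<omega>. \<alpha> t *\<^sub>R X0 \<omega> + \<beta> t *\<^sub>R X1 \<omega>)
                  (\<lambda>\<omega>. \<alpha>' t *\<^sub>R X0 \<omega> + \<beta>' t *\<^sub>R X1 \<omega>) (v t))
     \<and> (\<forall>x. f 0 x = x \<and>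
          (\<forall>t\<in>{0..1}. ((\<lambda>s. f s x) has_vector_derivative v t (f t x)) (at t within {0..1})))
     \<and> (\<forall>x g. g 0 = x \<and>
          (\<forall>t\<in>{0..1}. (g has_vector_derivative v t (g t)) (at t within {0..1}))
          \<longrightarrow> (\<forall>t\<in>{0..1}. g t = f t x))"
proof -
  obtain U lam mu where U: "orthonormal_basis U" and lam: "\<And>u. u \<in> U \<Longrightarrow> lam u > 0"
    and mu: "\<And>u. u \<in> U \<Longrightarrow> mu u > 0" and S0: "S0 = spectral_matrix U lam" and S1: "S1 = spectral_matrix U mu"
    using commuting_pos_def_simultaneous_spectral[OF assms(7-9)] by metis
  have ab: "\<alpha> t \<noteq> 0 \<or> \<beta> t \<noteq> 0" if "t \<in> {0..1}" for t
  proof (cases "t \<in> {0<..<1}")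
    case False
    with that assms(16,17) show ?thesis by auto
  qed (use assms(20) in force)
  interpret commuting_gaussian_path U lam mu \<alpha> \<beta> \<alpha>' \<beta>' m0 m1
    using U lam mu assms(10,13,16,19) ab by unfold_locales auto
  have v_field: "v t = field t" if "t \<in> {0..1}" for t
    unfolding v_def mdot_def Sdot_def S_def m_def S0 S1 by (intro ext velocity_eq_field[OF that])
  have f_flow: "f t x = flow 0 t x" if "t \<in> {0..1}" for t x
    unfolding f_def S_def m_def S0 S1 by (rule transport_eq_flow[OF that])
  have "is_cond_exp_given M (\<lambda>\<omega>. \<alpha> t *\<^sub>R X0 \<omega> + \<beta> t *\<^sub>R X1 \<omega>)
      (\<lambda>\<omega>. \<alpha>' t *\<^sub>R X0 \<omega> + \<beta>' t *\<^sub>R X1 \<omega>) (v t)" if "t \<in> {0..1}" for t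
    unfolding v_field[OF that] field_eq_regression mean_def mean'_def var_def
    by (rule cond_exp_gaussian_interpolant[OF assms(1-3) assms(4,5)[unfolded S0 S1] assms(6) U lam mu ab[OF that]])
  moreover have "((\<lambda>s. f s x) has_vector_derivative v t (f t x)) (at t within {0..1})" if "t \<in> {0..1}" for t x
    using has_vector_derivative_transform[OF that _ flow_has_vector_derivative[of 0 t x]] that
    by (simp add: f_flow v_field)
  moreover have "g t = f t (g 0)"
    if "\<forall>t\<in>{0..1}. (g has_vector_derivative v t (g t)) (at t within {0..1})" "t \<in> {0..1}" for g t
    using flow_unique[of 0 t g] that by (simp add: f_flow v_field)
  ultimately show ?thesis using f_flow[of 0] flow_start[of 0] by auto
qed

end
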